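(* Let $G_{\mathcal C}(A)$ be a two-player zero-sum complex game with $A=(a_{ij})\in\mathbb{C}^{m\times n}$ and strategy arguments $\alpha_0,\beta_0\in(0,\tfrac{\pi}{2})$. Then $G_{\mathcal C}(A)$ has a complex Nash equilibrium $(z^0,w^0)$ in which both $z^0$ and $w^0$ are equalizing strategies if and only if both of the following systems have at least one solution: $$\text{(I)}\quad \sum_{i=1}^m\overline{z_i}\,a_{ij}=\eta\ (j=1,\dots,n),\qquad \sum_{i=1}^m\overline{z_i}=1,\qquad \overline{z_i}=0\text{ or }|\arg\overline{z_i}|\le\alpha_0\ (i=1,\dots,m),$$ in unknowns $z\in\mathbb{C}^m$, $\eta\in\mathbb{C}$; $$\text{(II)}\quad \sum_{j=1}^n a_{ij}w_j=\theta\ (i=1,\dots,m),\qquad \sum_{j=1}^n w_j=1,\qquad w_j=0\text{ or }|\arg w_j|\le\beta_0\ (j=1,\dots,n),$$ in unknowns $w\in\mathbb{C}^n$, $\theta\in\mathbb{C}$. Moreover, if (I) and (II) have solutions, then $\mathrm{Re}(\eta)=\mathrm{Re}(\theta)=v_A$, the value of the game.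
   Context: For $\gamma\in(0,\tfrac{\pi}{2})$ and $p\ge 1$ let $S^p_\gamma=\{z\in\mathbb{C}^p:\ \text{for each }k,\ z_k=0\text{ or }|\arg z_k|\le\gamma,\ \sum_{k=1}^p z_k=1\}$ ($\arg$ the principal argument in $(-\pi,\pi]$). Its extreme points ("pure strategies") are $d^1,\dots,d^{p^2}$, where $d^k=e^k$ (standard basis vector) for $k\le p$, and $d^{p+1},\dots,d^{p^2}$ are the $p(p-1)$ vectors having exactly two nonzero coordinates, one equal to $\tfrac12+bi$ and another equal to $\tfrac12-bi$, with $b=\tfrac12\tan\gamma$. The two-player zero-sum complex game $G_{\mathcal C}(A)$: player I chooses $z\in S^m_{\alpha_0}$, player II chooses $w\in S^n_{\beta_0}$, player I receives $\mathrm{Re}(z^*Aw)$ and player II receives $-\mathrm{Re}(z^*Aw)$ ($z^*$ the conjugate transpose). Pure strategies: $d^i$, $i\in\mathcal I=\{1,\dots,m^2\}$, extreme points of $S^m_{\alpha_0}$; $d^j$, $j\in\mathcal J=\{1,\dots,n^2\}$, extreme points of $S^n_{\beta_0}$. A strategy $z\in S^m_{\alpha_0}$ of player I is equalizing with equalizing constant $c\in\mathbb{R}$ if $\mathrm{Re}(z^*Ad^j)=c$ for all $j\in\mathcal J$; a strategy $w\in S^n_{\beta_0}$ of player II is equalizing with equalizing constant $c\in\mathbb{R}$ if $\mathrm{Re}((d^i)^*Aw)=c$ for all $i\in\mathcal I$. A pair $(z^0,w^0)\in S^m_{\alpha_0}\times S^n_{\beta_0}$ is a complex Nash equilibrium if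 $\mathrm{Re}(z^*Aw^0)\le\mathrm{Re}((z^0)^*Aw^0)\le\mathrm{Re}((z^0)^*Aw)$ for all $z\in S^m_{\alpha_0}$, $w\in S^n_{\beta_0}$; the value is $v_A=\mathrm{Re}((z^0)^*Aw^0)$. *)

theory Defs
  imports "HOL-Analysis.Analysis"
begin

text \<open>Strategy set S^p_gamma, with p given by the finite index type 'p.
  Arg is the principal argument in (-pi, pi].\<close>
definition strat_set :: "real \<Rightarrow> (complex ^ 'p::finite) set" where
  "strat_set \<gamma> = {z. (\<forall>k. z $ k = 0 \<or> \<bar>Arg (z $ k)\<bar> \<le> \<gamma>) \<and> (\<Sum>k\<in>UNIV. z $ k) = 1}"

definition pure_strats :: "real \<Rightarrow> (complex ^ 'p::finite) set" where
  "pure_strats \<gamma> =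
     {axis k 1 | k. True} \<union>
     {(\<chi> i. if i = k then Complex (1/2) (tan \<gamma> / 2)
            else if i = l then Complex (1/2) (- (tan \<gamma> / 2)) else 0) | k l. k \<noteq> l}"

definition cform :: "complex ^ 'm::finite \<Rightarrow> complex ^ 'n::finite ^ 'm \<Rightarrow> complex ^ 'n \<Rightarrow> complex" where
  "cform z A w = (\<Sum>i\<in>UNIV. \<Sum>j\<in>UNIV. cnj (z $ i) * (A $ i $ j) * (w $ j))"

definition equalizing_I ::
  "real \<Rightarrow> real \<Rightarrow> complex ^ 'n::finite ^ 'm::finite \<Rightarrow> complex ^ 'm \<Rightarrow> real \<Rightarrow> bool" where
  "equalizing_I \<alpha>0 \<beta>0 A z c \<longleftrightarrow>
     z \<in> strat_set \<alpha>0 \<and> (\<forall>d \<in> pure_strats \<beta>0. Re (cform z A d) = c)"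

definition equalizing_II ::
  "real \<Rightarrow> real \<Rightarrow> complex ^ 'n::finite ^ 'm::finite \<Rightarrow> complex ^ 'n \<Rightarrow> real \<Rightarrow> bool" where
  "equalizing_II \<alpha>0 \<beta>0 A w c \<longleftrightarrow>
     w \<in> strat_set \<beta>0 \<and> (\<forall>d \<in> pure_strats \<alpha>0. Re (cform d A w) = c)"

definition complex_NE ::
  "real \<Rightarrow> real \<Rightarrow> complex ^ 'n::finite ^ 'm::finite \<Rightarrow> complex ^ 'm \<Rightarrow> complex ^ 'n \<Rightarrow> bool" where
  "complex_NE \<alpha>0 \<beta>0 A z0 w0 \<longleftrightarrow>
     z0 \<in> strat_set \<alpha>0 \<and> w0 \<in> strat_set \<beta>0 \<and>
     (\<forall>z \<in> strat_set \<alpha>0. \<forall>w \<in> strat_set \<beta>0.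
        Re (cform z A w0) \<le> Re (cform z0 A w0) \<and> Re (cform z0 A w0) \<le> Re (cform z0 A w))"

definition systemI :: "real \<Rightarrow> complex ^ 'n::finite ^ 'm::finite \<Rightarrow> complex ^ 'm \<Rightarrow> complex \<Rightarrow> bool" where
  "systemI \<alpha>0 A z \<eta> \<longleftrightarrow>
     (\<forall>j. (\<Sum>i\<in>UNIV. cnj (z $ i) * A $ i $ j) = \<eta>) \<and>
     (\<Sum>i\<in>UNIV. cnj (z $ i)) = 1 \<and>
     (\<forall>i. cnj (z $ i) = 0 \<or> \<bar>Arg (cnj (z $ i))\<bar> \<le> \<alpha>0)"

definition systemII :: "real \<Rightarrow> complex ^ 'n::finite ^ 'm::finite \<Rightarrow> complex ^ 'n \<Rightarrow> complex \<Rightarrow> bool" where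
  "systemII \<beta>0 A w \<theta> \<longleftrightarrow>
     (\<forall>i. (\<Sum>j\<in>UNIV. A $ i $ j * w $ j) = \<theta>) \<and>
     (\<Sum>j\<in>UNIV. w $ j) = 1 \<and>
     (\<forall>j. w $ j = 0 \<or> \<bar>Arg (w $ j)\<bar> \<le> \<beta>0)"

end

theory Submission
  imports Defs
begin

text \<open>If z solves (I), every mixed strategy of player II yields the payoff \<eta>, and
  symmetrically every strategy of player I yields \<theta> against a solution w of (II);
  hence such a pair is a saddle point and \<eta>, \<theta> both have real part v_A. Conversely, an
  equalizing z gives payoffs with the same real part c against every pure strategy
  e^k and against 1/2 + bi, 1/2 - bi on coordinates k, l; since b > 0 the latter
  forces the column combinations (z^* A)_k and (z^* A)_l to have equal imaginary
  parts, so z^* A is a constant vector. Player II reduces to player I through the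
  conjugate transpose of A.\<close>

definition pair_strat :: "real \<Rightarrow> 'p \<Rightarrow> 'p \<Rightarrow> complex ^ 'p" where
  "pair_strat \<gamma> k l = (\<chi> i. if i = k then Complex (1/2) (tan \<gamma> / 2)
                          else if i = l then Complex (1/2) (- (tan \<gamma> / 2)) else 0)"

lemma pure_strats_eq:
  "pure_strats \<gamma> = {axis k 1 | k. True} \<union> {pair_strat \<gamma> k l | k l. k \<noteq> l}"
  unfolding pure_strats_def pair_strat_def ..

definition conj_transpose :: "complex ^ 'n ^ 'm \<Rightarrow> complex ^ 'm ^ 'n" where
  "conj_transpose A = (\<chi> j i. cnj (A $ i $ j))"

lemma cform_conj_transpose: "cform w (conj_transpose A) z = cnj (cform z A w)"
  unfolding cform_def conj_transpose_def
  by (subst sum.swap) (simp add: mult.commute mult.left_commute)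

lemma cform_eq_sum_columns:
  "cform z A d = (\<Sum>j\<in>UNIV. (\<Sum>i\<in>UNIV. cnj (z $ i) * A $ i $ j) * d $ j)"
  unfolding cform_def by (subst sum.swap) (simp add: sum_distrib_right)

lemma cform_eq_sum_supported:
  fixes d :: "complex ^ 'n::finite"
  assumes "k \<noteq> l" "\<forall>j. j \<noteq> k \<and> j \<noteq> l \<longrightarrow> d $ j = 0"
  shows "cform z A d = (\<Sum>i\<in>UNIV. cnj (z $ i) * A $ i $ k) * d $ k
                     + (\<Sum>i\<in>UNIV. cnj (z $ i) * A $ i $ l) * d $ l"
proof -
  have "cform z A d = (\<Sum>j\<in>{k,l}. (\<Sum>i\<in>UNIV. cnj (z $ i) * A $ i $ j) * d $ j)"
    unfolding cform_eq_sum_columns by (rule sum.mono_neutral_right) (use assms in auto)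
  then show ?thesis using assms(1) by simp
qed

lemma cform_axis: "cform z A (axis k 1) = (\<Sum>i\<in>UNIV. cnj (z $ i) * A $ i $ k)"
  by (simp add: cform_eq_sum_columns axis_def if_distrib cong: if_cong)

lemma cform_pair_strat:
  assumes "k \<noteq> l"
  shows "cform z A (pair_strat \<gamma> k l) =
    (\<Sum>i\<in>UNIV. cnj (z $ i) * A $ i $ k) * Complex (1/2) (tan \<gamma> / 2)
    + (\<Sum>i\<in>UNIV. cnj (z $ i) * A $ i $ l) * Complex (1/2) (- (tan \<gamma> / 2))"
  using assms by (subst cform_eq_sum_supported[OF assms]) (auto simp: pair_strat_def)

lemma sum_pure_strat:
  assumes "d \<in> pure_strats \<gamma>"
  shows "(\<Sum>j\<in>UNIV. d $ j) = 1"
  using assms unfolding pure_strats_eq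
proof (elim UnE CollectE exE conjE)
  fix k l assume "k \<noteq> l" "d = pair_strat \<gamma> k l"
  then have "(\<Sum>j\<in>UNIV. d $ j) = (\<Sum>j\<in>{k,l}. d $ j)"
    by (intro sum.mono_neutral_right) (auto simp: pair_strat_def)
  also have "\<dots> = 1" using \<open>k \<noteq> l\<close> \<open>d = _\<close> by (simp add: pair_strat_def complex_eq_iff)
  finally show ?thesis .
qed (simp add: axis_def)

lemma strat_set_sum: "w \<in> strat_set \<gamma> \<Longrightarrow> (\<Sum>j\<in>UNIV. w $ j) = 1"
  unfolding strat_set_def by auto

lemma strat_set_iff_cnj:
  "z \<in> strat_set \<gamma> \<longleftrightarrow>
     (\<Sum>i\<in>UNIV. cnj (z $ i)) = 1 \<and> (\<forall>i. cnj (z $ i) = 0 \<or> \<bar>Arg (cnj (z $ i))\<bar> \<le> \<gamma>)"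
proof -
  have "(\<Sum>i\<in>UNIV. cnj (z $ i)) = 1 \<longleftrightarrow> (\<Sum>i\<in>UNIV. z $ i) = 1"
    by (metis cnj_sum complex_cnj_cnj complex_cnj_one)
  moreover have "\<bar>Arg (cnj w)\<bar> = \<bar>Arg w\<bar>" for w
    by (simp add: Arg_cnj)
  ultimately show ?thesis unfolding strat_set_def by auto
qed

lemma systemI_strat: "systemI \<alpha> A z \<eta> \<Longrightarrow> z \<in> strat_set \<alpha>"
  unfolding systemI_def strat_set_iff_cnj by blast

lemma systemI_cform:
  assumes "systemI \<alpha> A z \<eta>" "(\<Sum>j\<in>UNIV. d $ j) = 1"
  shows "cform z A d = \<eta>"
  using assms by (simp add: systemI_def cform_eq_sum_columns sum_distrib_left[symmetric])

lemma systemI_imp_equalizing_I: "systemI \<alpha> A z \<eta> \<Longrightarrow> equalizing_I \<alpha> \<beta> A z (Re \<eta>)"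
  unfolding equalizing_I_def by (simp add: systemI_strat systemI_cform sum_pure_strat)

lemma eq_if_Re_eq_pair_combination:
  fixes u v :: complex
  assumes "Re u = c" "Re v = c" "Re (u * Complex (1/2) t + v * Complex (1/2) (- t)) = c" "t \<noteq> 0"
  shows "u = v"
proof -
  have "t * (Im v - Im u) = 0" using assms(1-3) by (simp add: algebra_simps)
  then show ?thesis using assms(1,2,4) by (simp add: complex_eq_iff)
qed

lemma equalizing_I_imp_systemI:
  assumes "equalizing_I \<alpha> \<beta> A z c" "0 < \<beta>" "\<beta> < pi / 2"
  shows "\<exists>\<eta>. systemI \<alpha> A z \<eta>"
proof -
  define u where "u j = (\<Sum>i\<in>UNIV. cnj (z $ i) * A $ i $ j)" for j
  have payoff: "Re (cform z A d) = c" if "d \<in> pure_strats \<beta>" for d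
    using assms(1) that unfolding equalizing_I_def by blast
  have Re_u: "Re (u j) = c" for j
  proof -
    have "axis j 1 \<in> pure_strats \<beta>" unfolding pure_strats_eq by blast
    then show ?thesis using payoff cform_axis unfolding u_def by metis
  qed
  have "tan \<beta> / 2 \<noteq> 0" using assms(2,3) tan_gt_zero by fastforce
  have u_const: "u j = u k" for j k
  proof (cases "j = k")
    case False
    then have "pair_strat \<beta> j k \<in> pure_strats \<beta>" unfolding pure_strats_eq by blast
    then have "Re (cform z A (pair_strat \<beta> j k)) = c" by (rule payoff)
    then have "Re (u j * Complex (1/2) (tan \<beta> / 2) + u k * Complex (1/2) (- (tan \<beta> / 2))) = c"
      by (simp only: cform_pair_strat[OF False] u_def)
    then show ?thesis
      by (rule eq_if_Re_eq_pair_combination[OF Re_u Re_u _ \<open>tan \<beta> / 2 \<noteq> 0\<close>])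
  qed simp
  have "systemI \<alpha> A z (u k)" for k
    using assms(1) u_const unfolding systemI_def equalizing_I_def strat_set_iff_cnj u_def by auto
  then show ?thesis by blast
qed

lemma systemII_iff_systemI_conj_transpose:
  "systemII \<beta> A w \<theta> \<longleftrightarrow> systemI \<beta> (conj_transpose A) w (cnj \<theta>)"
proof -
  have rows: "(\<Sum>j\<in>UNIV. cnj (w $ j) * conj_transpose A $ j $ i) = cnj \<theta>
        \<longleftrightarrow> (\<Sum>j\<in>UNIV. A $ i $ j * w $ j) = \<theta>" for i
  proof -
    have "(\<Sum>j\<in>UNIV. cnj (w $ j) * conj_transpose A $ j $ i) = cnj (\<Sum>j\<in>UNIV. A $ i $ j * w $ j)"
      by (simp add: conj_transpose_def mult.commute)
    then show ?thesis by (simp only: complex_cnj_cancel_iff)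
  qed
  have "w \<in> strat_set \<beta> \<longleftrightarrow> (\<Sum>j\<in>UNIV. w $ j) = 1 \<and> (\<forall>j. w $ j = 0 \<or> \<bar>Arg (w $ j)\<bar> \<le> \<beta>)"
    unfolding strat_set_def by blast
  then show ?thesis
    unfolding systemII_def systemI_def rows strat_set_iff_cnj[symmetric] by simp
qed

lemma equalizing_II_iff_equalizing_I_conj_transpose:
  "equalizing_II \<alpha> \<beta> A w c \<longleftrightarrow> equalizing_I \<beta> \<alpha> (conj_transpose A) w c"
  unfolding equalizing_II_def equalizing_I_def by (simp add: cform_conj_transpose)

lemma systemII_strat: "systemII \<beta> A w \<theta> \<Longrightarrow> w \<in> strat_set \<beta>"
  by (simp add: systemII_iff_systemI_conj_transpose systemI_strat)

lemma systemII_cform: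
  assumes "systemII \<beta> A w \<theta>" "(\<Sum>i\<in>UNIV. cnj (d $ i)) = 1"
  shows "cform d A w = \<theta>"
proof -
  have "(\<Sum>i\<in>UNIV. d $ i) = 1" by (metis assms(2) cnj_sum complex_cnj_cnj complex_cnj_one)
  then have "cform w (conj_transpose A) d = cnj \<theta>"
    using assms(1) by (simp add: systemII_iff_systemI_conj_transpose systemI_cform)
  then show ?thesis by (simp add: cform_conj_transpose)
qed

lemma systemII_imp_equalizing_II: "systemII \<beta> A w \<theta> \<Longrightarrow> equalizing_II \<alpha> \<beta> A w (Re \<theta>)"
  using systemI_imp_equalizing_I[of \<beta> "conj_transpose A" w "cnj \<theta>" \<alpha>]
  by (simp add: systemII_iff_systemI_conj_transpose equalizing_II_iff_equalizing_I_conj_transpose)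

lemma equalizing_II_imp_systemII:
  assumes "equalizing_II \<alpha> \<beta> A w c" "0 < \<alpha>" "\<alpha> < pi / 2"
  shows "\<exists>\<theta>. systemII \<beta> A w \<theta>"
proof -
  have "equalizing_I \<beta> \<alpha> (conj_transpose A) w c"
    using assms(1) by (simp add: equalizing_II_iff_equalizing_I_conj_transpose)
  then obtain \<eta> where "systemI \<beta> (conj_transpose A) w \<eta>"
    using equalizing_I_imp_systemI assms(2,3) by blast
  then have "systemII \<beta> A w (cnj \<eta>)"
    by (simp add: systemII_iff_systemI_conj_transpose)
  then show ?thesis ..
qed

lemma systems_cform_solutions:
  assumes "systemI \<alpha> A z \<eta>" "systemII \<beta> A w \<theta>"
  shows "\<forall>w' \<in> strat_set \<beta>. cform z A w' = \<eta>" "\<forall>z' \<in> strat_set \<alpha>. cform z' A w = \<theta>"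
    and "\<eta> = \<theta>"
proof -
  show w': "\<forall>w' \<in> strat_set \<beta>. cform z A w' = \<eta>"
    using assms(1) by (simp add: systemI_cform strat_set_sum)
  show z': "\<forall>z' \<in> strat_set \<alpha>. cform z' A w = \<theta>"
    using assms(2) by (simp add: systemII_cform strat_set_iff_cnj)
  have "cform z A w = \<eta>" using w' systemII_strat[OF assms(2)] by blast
  moreover have "cform z A w = \<theta>" using z' systemI_strat[OF assms(1)] by blast
  ultimately show "\<eta> = \<theta>" by simp
qed

lemma systems_imp_complex_NE:
  assumes "systemI \<alpha> A z \<eta>" "systemII \<beta> A w \<theta>"
  shows "complex_NE \<alpha> \<beta> A z w"
  using systems_cform_solutions[OF assms] systemI_strat[OF assms(1)] systemII_strat[OF assms(2)]
  unfolding complex_NE_def by simp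

lemma systems_Re_eq_value:
  assumes "systemI \<alpha> A z \<eta>" "systemII \<beta> A w \<theta>" "complex_NE \<alpha> \<beta> A z0 w0"
  shows "Re \<eta> = Re (cform z0 A w0) \<and> Re \<theta> = Re (cform z0 A w0)"
proof -
  note payoffs = systems_cform_solutions[OF assms(1,2)]
  have "z0 \<in> strat_set \<alpha>" "w0 \<in> strat_set \<beta>" using assms(3) unfolding complex_NE_def by auto
  then have "cform z A w0 = \<eta>" "cform z0 A w = \<theta>" using payoffs by auto
  moreover have "Re (cform z A w0) \<le> Re (cform z0 A w0)" "Re (cform z0 A w0) \<le> Re (cform z0 A w)"
    using assms(3) systemI_strat[OF assms(1)] systemII_strat[OF assms(2)]
    unfolding complex_NE_def by auto
  ultimately show ?thesis using payoffs(3) by auto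
qed

theorem theorem7p5:
  fixes A :: "complex ^ 'n::finite ^ 'm::finite"
    and \<alpha>0 \<beta>0 :: real
  assumes "0 < \<alpha>0" "\<alpha>0 < pi / 2" "0 < \<beta>0" "\<beta>0 < pi / 2"
  shows "((\<exists>z0 w0. complex_NE \<alpha>0 \<beta>0 A z0 w0 \<and>
             (\<exists>c. equalizing_I \<alpha>0 \<beta>0 A z0 c) \<and> (\<exists>c. equalizing_II \<alpha>0 \<beta>0 A w0 c))
          \<longleftrightarrow> ((\<exists>z \<eta>. systemI \<alpha>0 A z \<eta>) \<and> (\<exists>w \<theta>. systemII \<beta>0 A w \<theta>)))
       \<and> (\<forall>z \<eta> w \<theta>. systemI \<alpha>0 A z \<eta> \<longrightarrow> systemII \<beta>0 A w \<theta> \<longrightarrow>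
            (\<forall>z0 w0. complex_NE \<alpha>0 \<beta>0 A z0 w0 \<longrightarrow>
               Re \<eta> = Re (cform z0 A w0) \<and> Re \<theta> = Re (cform z0 A w0)))"
proof (intro conjI iffI allI impI)
  assume "\<exists>z0 w0. complex_NE \<alpha>0 \<beta>0 A z0 w0 \<and>
             (\<exists>c. equalizing_I \<alpha>0 \<beta>0 A z0 c) \<and> (\<exists>c. equalizing_II \<alpha>0 \<beta>0 A w0 c)"
  then obtain z0 w0 c1 c2
    where eqI: "equalizing_I \<alpha>0 \<beta>0 A z0 c1" and eqII: "equalizing_II \<alpha>0 \<beta>0 A w0 c2"
    by blast
  show "\<exists>z \<eta>. systemI \<alpha>0 A z \<eta>" using equalizing_I_imp_systemI[OF eqI assms(3,4)] by blast
  show "\<exists>w \<theta>. systemII \<beta>0 A w \<theta>" using equalizing_II_imp_systemII[OF eqII assms(1,2)] by blast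
next
  assume "(\<exists>z \<eta>. systemI \<alpha>0 A z \<eta>) \<and> (\<exists>w \<theta>. systemII \<beta>0 A w \<theta>)"
  then obtain z \<eta> w \<theta> where I: "systemI \<alpha>0 A z \<eta>" and II: "systemII \<beta>0 A w \<theta>" by blast
  show "\<exists>z0 w0. complex_NE \<alpha>0 \<beta>0 A z0 w0 \<and>
             (\<exists>c. equalizing_I \<alpha>0 \<beta>0 A z0 c) \<and> (\<exists>c. equalizing_II \<alpha>0 \<beta>0 A w0 c)"
    using systems_imp_complex_NE[OF I II] systemI_imp_equalizing_I[OF I]
      systemII_imp_equalizing_II[OF II] by blast
next
  fix z \<eta> w \<theta> z0 w0
  assume "systemI \<alpha>0 A z \<eta>" "systemII \<beta>0 A w \<theta>" "complex_NE \<alpha>0 \<beta>0 A z0 w0"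
  then show "Re \<eta> = Re (cform z0 A w0)" "Re \<theta> = Re (cform z0 A w0)"
    by (auto dest: systems_Re_eq_value)
qed

end
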